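(* Let $n\ge2$, $m\ge1$. Let $H_C$ be any Hermitian operator on the $mn$ qubits that is diagonal in the computational basis, and let $U_C(\gamma)=e^{-i\gamma H_C}$. Let $U_M(\beta)=\bigotimes_{b=0}^{m-1}e^{-i\beta H_M^{(b)}}$ where $H_M^{(b)}=\sum_{0\le i<j\le n-1}(X_i^{(b)}X_j^{(b)}+Y_i^{(b)}Y_j^{(b)})$ acts on block $b$. Let $|s_0\rangle=|W_n\rangle^{\otimes m}$ with $|W_n\rangle=\frac1{\sqrt n}\sum_{k=0}^{n-1}|e_k\rangle$. Then for every product basis vector $|x^\star\rangle\in\mathcal H_{\mathrm{OH}}$ and every $(\gamma,\beta)\in\mathbb R^2$ there exists a blockwise permutation $\mathsf P^\star=\bigotimes_{b=0}^{m-1}\mathsf P_b$ such that $$\bigl|\langle x^\star|\mathsf P^{\star\dagger}U_M(\beta)U_C(\gamma)|s_0\rangle\bigr|^2\ \ge\ \frac{1}{n^m}.$$ In particular this holds when $x^\star$ is a feasible optimal label and $(\gamma,\beta)$ ranges over the grid $\{j\pi/n: j=0,\dots,n\}^2$.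
   Context: A block is a register of $n$ qubits; $|e_k\rangle$ denotes the $n$-qubit basis state with qubit $k$ in $|1\rangle$ and all others in $|0\rangle$, $\mathcal H_1=\mathrm{span}\{|e_0\rangle,\dots,|e_{n-1}\rangle\}$, and $\mathcal H_{\mathrm{OH}}=\mathcal H_1^{\otimes m}$ (dimension $n^m$) with product basis $|x\rangle=|e_{j_0}\rangle\otimes\cdots\otimes|e_{j_{m-1}}\rangle$, $x\in\{0,\dots,n-1\}^m$. $X_i^{(b)},Y_i^{(b)}$ are Pauli operators on qubit $i$ of block $b$. Both $U_C(\gamma)$ and $U_M(\beta)$ map $\mathcal H_{\mathrm{OH}}$ to itself. A blockwise permutation is $\mathsf P=\bigotimes_b\mathsf P_b$ with $\mathsf P_b|e_j\rangle=|e_{\pi_b(j)}\rangle$ for permutations $\pi_b$ of $\{0,\dots,n-1\}$. *)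

theory Defs
  imports "Jordan_Normal_Form.Matrix" "HOL-Library.FuncSet" "HOL-Combinatorics.Permutations"
begin

text \<open>Qubit register of N qubits: computational basis states are indexed by
  z < 2^N, qubit q being in state 1 iff bit q of z is set.
  In the m-block setting, qubit i of block b is qubit b*n+i.\<close>

definition hermitian_mat :: "complex mat \<Rightarrow> bool" where
  "hermitian_mat A \<longleftrightarrow> dim_row A = dim_col A \<and>
     (\<forall>i<dim_row A. \<forall>j<dim_col A. A $$ (j,i) = cnj (A $$ (i,j)))"

definition mat_exp :: "complex mat \<Rightarrow> complex mat" where
  "mat_exp A = mat (dim_row A) (dim_col A)
     (\<lambda>(i,j). \<Sum>k. (A ^\<^sub>m k) $$ (i,j) / of_nat (fact k))"

definition pauliX :: "nat \<Rightarrow> nat \<Rightarrow> complex mat" where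
  "pauliX N q = mat (2^N) (2^N) (\<lambda>(r,c). if r = flip_bit q c then 1 else 0)"

definition pauliY :: "nat \<Rightarrow> nat \<Rightarrow> complex mat" where
  "pauliY N q = mat (2^N) (2^N)
     (\<lambda>(r,c). if r = flip_bit q c then (if bit c q then - \<i> else \<i>) else 0)"

definition mixer_block :: "nat \<Rightarrow> nat \<Rightarrow> nat \<Rightarrow> complex mat" where
  "mixer_block m n b = mat (2^(m*n)) (2^(m*n)) (\<lambda>(r,c).
     \<Sum>i<n. \<Sum>j\<in>{i<..<n}.
       (pauliX (m*n) (b*n+i) * pauliX (m*n) (b*n+j)
        + pauliY (m*n) (b*n+i) * pauliY (m*n) (b*n+j)) $$ (r,c))"

text \<open>Product over the blocks b < k of exp(-i beta H_M^(b)); the factors act on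
  disjoint blocks (and commute), so for k = m this is the tensor product.\<close>
fun mixer_unitary_upto :: "nat \<Rightarrow> nat \<Rightarrow> real \<Rightarrow> nat \<Rightarrow> complex mat" where
  "mixer_unitary_upto m n \<beta> 0 = 1\<^sub>m (2^(m*n))"
| "mixer_unitary_upto m n \<beta> (Suc b) =
     mixer_unitary_upto m n \<beta> b * mat_exp ((- \<i> * complex_of_real \<beta>) \<cdot>\<^sub>m mixer_block m n b)"

definition U_M :: "nat \<Rightarrow> nat \<Rightarrow> real \<Rightarrow> complex mat" where
  "U_M m n \<beta> = mixer_unitary_upto m n \<beta> m"

definition U_C :: "complex mat \<Rightarrow> real \<Rightarrow> complex mat" where
  "U_C H \<gamma> = mat_exp ((- \<i> * complex_of_real \<gamma>) \<cdot>\<^sub>m H)"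

text \<open>One-hot labels x \<in> {0..n-1}^m and the index of the product basis state
  |e_{x_0}> \<otimes> ... \<otimes> |e_{x_{m-1}}>.\<close>
definition labels :: "nat \<Rightarrow> nat \<Rightarrow> (nat \<Rightarrow> nat) set" where
  "labels m n = PiE {..<m} (\<lambda>_. {..<n})"

definition oh_index :: "nat \<Rightarrow> nat \<Rightarrow> (nat \<Rightarrow> nat) \<Rightarrow> nat" where
  "oh_index m n x = (\<Sum>b<m. 2 ^ (b*n + x b))"

text \<open>|s_0> = |W_n>^{\<otimes> m} = \<Sum>_x n^{-m/2} |x>.\<close>
definition s0 :: "nat \<Rightarrow> nat \<Rightarrow> complex vec" where
  "s0 m n = vec (2^(m*n)) (\<lambda>z.
     \<Sum>x\<in>labels m n. if oh_index m n x = z then complex_of_real ((1 / sqrt n) ^ m) else 0)"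

text \<open>Blockwise permutation P = \<otimes>_b P_b acting on labels: P|x> = |(\<pi>_b(x_b))_b>.\<close>
definition blockperm :: "nat \<Rightarrow> (nat \<Rightarrow> nat \<Rightarrow> nat) \<Rightarrow> (nat \<Rightarrow> nat) \<Rightarrow> (nat \<Rightarrow> nat)" where
  "blockperm m \<pi> x = (\<lambda>b. if b < m then \<pi> b (x b) else undefined)"

end

theory Submission
  imports Defs
begin

text \<open>Both U_C = exp(-i gamma H_C) and every factor exp(-i beta H_M^(b)) of U_M are exponentials
  of -i times a Hermitian matrix, hence unitary. They also map the span of the one-hot basis states
  into itself: U_C is diagonal, and each hopping term X_i X_j + Y_i Y_j of the XY mixer only moves
  the single excitation of a block from one qubit to another. So psi = U_M U_C s0 is a unit vector
  supported on the n^m one-hot states, some label y carries weight |psi_y|^2 >= 1/n^m, and the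
  blockwise transpositions exchanging x*_b with y_b move x* onto y.\<close>

section \<open>Matrix exponential\<close>

lemma pow_mat_add:
  assumes "A \<in> carrier_mat N N"
  shows "A ^\<^sub>m (j + k) = A ^\<^sub>m j * A ^\<^sub>m k"
proof (induction k)
  case 0 then show ?case using assms by simp
next
  case (Suc k)
  then show ?case using assms by (simp add: assoc_mult_mat[of _ N N _ N _ N])
qed

lemma pow_mat_smult:
  fixes A :: "'a::comm_ring_1 mat"
  assumes "A \<in> carrier_mat N N"
  shows "(c \<cdot>\<^sub>m A) ^\<^sub>m k = c ^ k \<cdot>\<^sub>m A ^\<^sub>m k"
proof (induction k)
  case 0 then show ?case using assms by (auto intro!: eq_matI)
next
  case (Suc k)
  then show ?case using assms
    by (auto simp: mult_smult_assoc_mat[of _ N N _ N] mult_smult_distrib[of _ N N _ N] intro!: eq_matI)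
qed

lemma norm_pow_mat_index_le:
  fixes A :: "complex mat"
  assumes A: "A \<in> carrier_mat N N" and "r < N" "c < N"
  shows "cmod ((A ^\<^sub>m k) $$ (r,c)) \<le> (\<Sum>i<N. \<Sum>j<N. cmod (A $$ (i,j))) ^ k"
  using assms(2,3)
proof (induction k arbitrary: c)
  case 0 then show ?case using A by auto
next
  case (Suc k)
  define s where "s = (\<Sum>i<N. \<Sum>j<N. cmod (A $$ (i,j)))"
  have column_le: "(\<Sum>l<N. cmod (A $$ (l,c))) \<le> s"
    unfolding s_def by (intro sum_mono member_le_sum) (use Suc.prems in auto)
  have "cmod ((A ^\<^sub>m Suc k) $$ (r,c)) \<le> (\<Sum>l<N. cmod ((A ^\<^sub>m k) $$ (r,l)) * cmod (A $$ (l,c)))"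
    using A Suc.prems by (simp add: scalar_prod_def lessThan_atLeast0 norm_sum flip: norm_mult)
  also have "\<dots> \<le> (\<Sum>l<N. s ^ k * cmod (A $$ (l,c)))"
    by (intro sum_mono mult_right_mono) (use Suc s_def in auto)
  also have "\<dots> = s ^ k * (\<Sum>l<N. cmod (A $$ (l,c)))"
    by (simp add: sum_distrib_left)
  also have "\<dots> \<le> s ^ k * s"
    using column_le by (intro mult_left_mono) (simp_all add: s_def sum_nonneg)
  finally show ?case unfolding s_def by (simp add: mult.commute)
qed

lemma summable_mat_exp_series:
  fixes A :: "complex mat"
  assumes A: "A \<in> carrier_mat N N" and "r < N" "c < N"
  shows "summable (\<lambda>k. norm ((A ^\<^sub>m k) $$ (r,c) / of_nat (fact k)))"
proof (rule summable_comparison_test)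
  define s where "s = (\<Sum>i<N. \<Sum>j<N. cmod (A $$ (i,j)))"
  show "summable (\<lambda>k. s ^ k / fact k)"
    using summable_exp[of s] by (simp add: divide_inverse mult.commute)
  show "\<exists>K. \<forall>k\<ge>K. norm (norm ((A ^\<^sub>m k) $$ (r,c) / of_nat (fact k))) \<le> s ^ k / fact k"
    using norm_pow_mat_index_le[OF assms] by (auto simp: s_def norm_divide intro!: divide_right_mono)
qed

lemma mat_exp_carrier [simp]: "A \<in> carrier_mat N N \<Longrightarrow> mat_exp A \<in> carrier_mat N N"
  unfolding mat_exp_def carrier_mat_def by auto

lemma index_mat_exp:
  "i < dim_row A \<Longrightarrow> j < dim_col A \<Longrightarrow>
   mat_exp A $$ (i,j) = (\<Sum>k. (A ^\<^sub>m k) $$ (i,j) / of_nat (fact k))"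
  by (simp add: mat_exp_def)

text \<open>By the binomial theorem this coefficient is (1 - 1)^k K^k / k!.\<close>

lemma cauchy_coeff_mat_exp_neg:
  fixes K :: "complex mat"
  assumes K: "K \<in> carrier_mat N N" and "r < N" "c < N"
  shows "(\<Sum>l<N. \<Sum>i\<le>k. (((-1) \<cdot>\<^sub>m K) ^\<^sub>m i) $$ (r,l) / of_nat (fact i)
            * ((K ^\<^sub>m (k - i)) $$ (l,c) / of_nat (fact (k - i))))
       = (if k = 0 \<and> r = c then 1 else 0)"
proof -
  have "(\<Sum>l<N. \<Sum>i\<le>k. (((-1) \<cdot>\<^sub>m K) ^\<^sub>m i) $$ (r,l) / of_nat (fact i)
            * ((K ^\<^sub>m (k - i)) $$ (l,c) / of_nat (fact (k - i))))
      = (\<Sum>i\<le>k. (-1) ^ i / (fact i * fact (k - i)) * (\<Sum>l<N. (K ^\<^sub>m i) $$ (r,l) * (K ^\<^sub>m (k - i)) $$ (l,c)))"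
    using K assms by (subst sum.swap) (simp add: pow_mat_smult sum_distrib_left algebra_simps)
  also have "\<dots> = (\<Sum>i\<le>k. (-1) ^ i * of_nat (k choose i)) * ((K ^\<^sub>m k) $$ (r,c) / fact k)"
  proof -
    have "(\<Sum>l<N. (K ^\<^sub>m i) $$ (r,l) * (K ^\<^sub>m (k - i)) $$ (l,c)) = (K ^\<^sub>m k) $$ (r,c)" if "i \<le> k" for i
      using K assms that pow_mat_add[OF K, of i "k - i"] by (simp add: scalar_prod_def lessThan_atLeast0)
    moreover have "(-1) ^ i / (fact i * fact (k - i)) = (-1) ^ i * of_nat (k choose i) / (fact k :: complex)"
      if "i \<le> k" for i
      using that by (simp add: binomial_fact)
    ultimately show ?thesis by (simp add: sum_distrib_right sum_divide_distrib)
  qed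
  also have "\<dots> = (if k = 0 \<and> r = c then 1 else 0)"
    using choose_alternating_sum[of k, where 'a=complex] K assms by (cases "k = 0") auto
  finally show ?thesis .
qed

lemma mat_exp_neg_mult:
  fixes K :: "complex mat"
  assumes K: "K \<in> carrier_mat N N"
  shows "mat_exp ((-1) \<cdot>\<^sub>m K) * mat_exp K = 1\<^sub>m N"
proof (rule eq_matI)
  have K': "(-1) \<cdot>\<^sub>m K \<in> carrier_mat N N" using K by simp
  show "dim_row (mat_exp ((-1) \<cdot>\<^sub>m K) * mat_exp K) = dim_row (1\<^sub>m N)"
    "dim_col (mat_exp ((-1) \<cdot>\<^sub>m K) * mat_exp K) = dim_col (1\<^sub>m N)"
    using mat_exp_carrier[OF K] mat_exp_carrier[OF K'] by auto
  fix r c assume "r < dim_row (1\<^sub>m N)" "c < dim_col (1\<^sub>m N)"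
  hence rc: "r < N" "c < N" by auto
  define a where "a l i = (((-1) \<cdot>\<^sub>m K) ^\<^sub>m i) $$ (r,l) / of_nat (fact i)" for l i
  define b where "b l i = (K ^\<^sub>m i) $$ (l,c) / of_nat (fact i)" for l i
  have summable_a: "summable (\<lambda>i. norm (a l i))" and summable_b: "summable (\<lambda>i. norm (b l i))"
    if "l < N" for l
    unfolding a_def b_def
    using summable_mat_exp_series[OF K' rc(1) that] summable_mat_exp_series[OF K that rc(2)] by auto
  have "(mat_exp ((-1) \<cdot>\<^sub>m K) * mat_exp K) $$ (r,c) = (\<Sum>l<N. (\<Sum>i. a l i) * (\<Sum>i. b l i))"
    using K K' rc by (simp add: scalar_prod_def lessThan_atLeast0 mat_exp_def a_def b_def)
  also have "\<dots> = (\<Sum>l<N. \<Sum>k. \<Sum>i\<le>k. a l i * b l (k - i))"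
    using summable_a summable_b by (intro sum.cong refl Cauchy_product) auto
  also have "\<dots> = (\<Sum>k. \<Sum>l<N. \<Sum>i\<le>k. a l i * b l (k - i))"
    using summable_a summable_b by (intro suminf_sum[symmetric] summable_Cauchy_product) auto
  also have "\<dots> = (\<Sum>k. if k = 0 \<and> r = c then 1 else 0)"
    unfolding a_def b_def using cauchy_coeff_mat_exp_neg[OF K rc] by simp
  also have "\<dots> = (\<Sum>k. if k = 0 then 1\<^sub>m N $$ (r,c) else 0)"
    using rc by (intro suminf_cong) auto
  also have "\<dots> = 1\<^sub>m N $$ (r,c)"
    using sums_single[of 0 "\<lambda>_. 1\<^sub>m N $$ (r,c)"] by (rule sums_unique[symmetric])
  finally show "(mat_exp ((-1) \<cdot>\<^sub>m K) * mat_exp K) $$ (r,c) = 1\<^sub>m N $$ (r,c)" .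
qed

lemma hermitian_matD:
  "hermitian_mat B \<Longrightarrow> i < dim_row B \<Longrightarrow> j < dim_col B \<Longrightarrow> B $$ (i,j) = cnj (B $$ (j,i))"
  unfolding hermitian_mat_def by (metis complex_cnj_cnj)

lemma hermitian_mat_pow:
  assumes A: "A \<in> carrier_mat N N" and herm: "hermitian_mat A"
  shows "hermitian_mat (A ^\<^sub>m k)"
proof (induction k)
  case 0 then show ?case using A by (auto simp: hermitian_mat_def)
next
  case (Suc k)
  have "(A ^\<^sub>m Suc k) $$ (c,r) = cnj ((A ^\<^sub>m Suc k) $$ (r,c))" if rc: "r < N" "c < N" for r c
  proof -
    have "(A ^\<^sub>m Suc k) $$ (c,r) = (\<Sum>l<N. (A ^\<^sub>m k) $$ (c,l) * A $$ (l,r))"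
      using A rc by (simp add: scalar_prod_def lessThan_atLeast0)
    also have "\<dots> = (\<Sum>l<N. cnj (A $$ (r,l) * (A ^\<^sub>m k) $$ (l,c)))"
    proof (rule sum.cong[OF refl])
      fix l assume "l \<in> {..<N}"
      then have "(A ^\<^sub>m k) $$ (c,l) = cnj ((A ^\<^sub>m k) $$ (l,c))" "A $$ (l,r) = cnj (A $$ (r,l))"
        using Suc herm A rc by (auto intro!: hermitian_matD)
      then show "(A ^\<^sub>m k) $$ (c,l) * A $$ (l,r) = cnj (A $$ (r,l) * (A ^\<^sub>m k) $$ (l,c))"
        by (simp add: mult.commute)
    qed
    also have "\<dots> = cnj ((A * A ^\<^sub>m k) $$ (r,c))"
      using A rc by (simp add: scalar_prod_def lessThan_atLeast0)
    also have "A * A ^\<^sub>m k = A ^\<^sub>m Suc k"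
      using pow_mat_add[OF A, of 1 k] A by simp
    finally show ?thesis .
  qed
  then show ?case unfolding hermitian_mat_def pow_mat_dim_square[OF A] by blast
qed

lemma cnj_suminf: "summable f \<Longrightarrow> cnj (suminf f) = (\<Sum>k. cnj (f k))"
  by (metis sums_cnj sums_unique summable_sums)

lemma index_mat_exp_adjoint:
  fixes A :: "complex mat" and \<theta> :: real
  defines "K \<equiv> (- \<i> * complex_of_real \<theta>) \<cdot>\<^sub>m A"
  assumes A: "A \<in> carrier_mat N N" and herm: "hermitian_mat A" and rc: "r < N" "c < N"
  shows "mat_exp ((-1) \<cdot>\<^sub>m K) $$ (r,c) = cnj (mat_exp K $$ (c,r))"
proof -
  have K: "K \<in> carrier_mat N N" using A unfolding K_def by simp
  have A_pow_adj: "(A ^\<^sub>m k) $$ (r,c) = cnj ((A ^\<^sub>m k) $$ (c,r))" for k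
    using A rc by (intro hermitian_matD hermitian_mat_pow[OF A herm]) auto
  have "(-1) \<cdot>\<^sub>m K = (\<i> * complex_of_real \<theta>) \<cdot>\<^sub>m A"
    unfolding K_def by (auto intro!: eq_matI)
  then have "(((-1) \<cdot>\<^sub>m K) ^\<^sub>m k) $$ (r,c) = cnj ((K ^\<^sub>m k) $$ (c,r))" for k
    using A rc by (simp add: K_def pow_mat_smult A_pow_adj)
  then have "mat_exp ((-1) \<cdot>\<^sub>m K) $$ (r,c) = (\<Sum>k. cnj ((K ^\<^sub>m k) $$ (c,r) / of_nat (fact k)))"
    using K rc by (simp add: index_mat_exp)
  also have "\<dots> = cnj (mat_exp K $$ (c,r))"
    using K rc summable_norm_cancel[OF summable_mat_exp_series[OF K rc(2,1)]]
    by (simp add: index_mat_exp cnj_suminf)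
  finally show ?thesis .
qed

section \<open>Isometries and invariant coordinate subspaces\<close>

definition sq_norm_vec :: "complex vec \<Rightarrow> real" where
  "sq_norm_vec v = (\<Sum>i<dim_vec v. (cmod (v $ i))\<^sup>2)"

lemma of_real_sq_norm_vec: "complex_of_real (sq_norm_vec v) = (\<Sum>i<dim_vec v. cnj (v $ i) * v $ i)"
  unfolding sq_norm_vec_def of_real_sum by (intro sum.cong refl) (metis complex_norm_square mult.commute)

lemma sq_norm_vec_mult_unitary:
  fixes U V :: "complex mat"
  assumes U: "U \<in> carrier_mat N N" and V: "V \<in> carrier_mat N N" and VU: "V * U = 1\<^sub>m N"
    and adj: "\<And>r c. r < N \<Longrightarrow> c < N \<Longrightarrow> V $$ (r,c) = cnj (U $$ (c,r))"
    and w: "w \<in> carrier_vec N"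
  shows "sq_norm_vec (U *\<^sub>v w) = sq_norm_vec w"
proof -
  have orthonormal: "(\<Sum>r<N. cnj (U $$ (r,c)) * U $$ (r,d)) = of_bool (c = d)"
    if "c < N" "d < N" for c d
    using arg_cong[OF VU, of "\<lambda>M. M $$ (c,d)"] U V adj that
    by (simp add: scalar_prod_def lessThan_atLeast0)
  have Uw: "(U *\<^sub>v w) $ r = (\<Sum>c<N. U $$ (r,c) * w $ c)" if "r < N" for r
    using U w that by (simp add: scalar_prod_def lessThan_atLeast0)
  have "complex_of_real (sq_norm_vec (U *\<^sub>v w)) = (\<Sum>r<N. cnj ((U *\<^sub>v w) $ r) * (U *\<^sub>v w) $ r)"
    using U by (simp add: of_real_sq_norm_vec)
  also have "\<dots> = (\<Sum>r<N. \<Sum>c<N. \<Sum>d<N. cnj (w $ c) * w $ d * (cnj (U $$ (r,c)) * U $$ (r,d)))"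
    by (intro sum.cong refl) (simp add: Uw sum_product mult_ac, rule sum.swap)
  also have "\<dots> = (\<Sum>c<N. \<Sum>r<N. \<Sum>d<N. cnj (w $ c) * w $ d * (cnj (U $$ (r,c)) * U $$ (r,d)))"
    by (rule sum.swap)
  also have "\<dots> = (\<Sum>c<N. \<Sum>d<N. cnj (w $ c) * w $ d * (\<Sum>r<N. cnj (U $$ (r,c)) * U $$ (r,d)))"
    by (rule sum.cong[OF refl]) (simp add: sum_distrib_left, rule sum.swap)
  also have "\<dots> = (\<Sum>c<N. cnj (w $ c) * w $ c)"
    by (simp add: orthonormal of_bool_def if_distrib sum.delta cong: if_cong)
  also have "\<dots> = complex_of_real (sq_norm_vec w)"
    using w by (simp add: of_real_sq_norm_vec)
  finally show ?thesis by (simp only: of_real_eq_iff)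
qed

definition isometric_mat :: "nat \<Rightarrow> complex mat \<Rightarrow> bool" where
  "isometric_mat N U \<longleftrightarrow>
     U \<in> carrier_mat N N \<and> (\<forall>w \<in> carrier_vec N. sq_norm_vec (U *\<^sub>v w) = sq_norm_vec w)"

lemma isometric_mat_one: "isometric_mat N (1\<^sub>m N)"
  unfolding isometric_mat_def by simp

lemma isometric_mat_mult:
  assumes "isometric_mat N A" "isometric_mat N B"
  shows "isometric_mat N (A * B)"
  using assms unfolding isometric_mat_def by (auto simp: assoc_mult_mat_vec[of _ N N _ N])

lemma isometric_mat_exp:
  fixes A :: "complex mat" and \<theta> :: real
  assumes A: "A \<in> carrier_mat N N" and herm: "hermitian_mat A"
  shows "isometric_mat N (mat_exp ((- \<i> * complex_of_real \<theta>) \<cdot>\<^sub>m A))"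
proof -
  define K where "K = (- \<i> * complex_of_real \<theta>) \<cdot>\<^sub>m A"
  have K: "K \<in> carrier_mat N N" using A unfolding K_def by simp
  have "sq_norm_vec (mat_exp K *\<^sub>v w) = sq_norm_vec w" if "w \<in> carrier_vec N" for w
    using mat_exp_carrier[OF K] mat_exp_carrier[of "(-1) \<cdot>\<^sub>m K"] K mat_exp_neg_mult[OF K]
      index_mat_exp_adjoint[OF A herm] that
    by (intro sq_norm_vec_mult_unitary[where V = "mat_exp ((-1) \<cdot>\<^sub>m K)"]) (auto simp: K_def)
  then show ?thesis using K unfolding isometric_mat_def K_def by auto
qed

definition coord_invariant :: "nat set \<Rightarrow> 'a::zero mat \<Rightarrow> bool" where
  "coord_invariant S A \<longleftrightarrow>
     (\<forall>r < dim_row A. \<forall>c < dim_col A. c \<in> S \<longrightarrow> A $$ (r,c) \<noteq> 0 \<longrightarrow> r \<in> S)"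

lemma coord_invariantD:
  "coord_invariant S A \<Longrightarrow> r < dim_row A \<Longrightarrow> c < dim_col A \<Longrightarrow> c \<in> S \<Longrightarrow> r \<notin> S \<Longrightarrow> A $$ (r,c) = 0"
  unfolding coord_invariant_def by blast

lemma coord_invariant_one: "coord_invariant S (1\<^sub>m N)"
  unfolding coord_invariant_def by auto

lemma coord_invariant_diagonal: "diagonal_mat A \<Longrightarrow> coord_invariant S A"
  unfolding coord_invariant_def diagonal_mat_def by blast

lemma coord_invariant_smult:
  fixes A :: "'a::mult_zero mat"
  shows "coord_invariant S A \<Longrightarrow> coord_invariant S (a \<cdot>\<^sub>m A)"
  unfolding coord_invariant_def by (auto, metis mult_zero_right)

lemma coord_invariant_mult:
  fixes A B :: "'a::semiring_0 mat"
  assumes A: "A \<in> carrier_mat N N" and B: "B \<in> carrier_mat N N"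
    and inv_A: "coord_invariant S A" and inv_B: "coord_invariant S B"
  shows "coord_invariant S (A * B)"
  unfolding coord_invariant_def
proof (intro allI impI)
  fix r c assume "r < dim_row (A * B)" "c < dim_col (A * B)" "c \<in> S" "(A * B) $$ (r,c) \<noteq> 0"
  then have rc: "r < N" "c < N" and "(\<Sum>l<N. A $$ (r,l) * B $$ (l,c)) \<noteq> 0"
    using A B by (auto simp: scalar_prod_def lessThan_atLeast0)
  then obtain l where l: "l < N" "A $$ (r,l) \<noteq> 0" "B $$ (l,c) \<noteq> 0"
    by (metis (no_types, lifting) lessThan_iff mult_not_zero sum.neutral)
  have "l \<in> S"
    using coord_invariantD[OF inv_B, of l c] B l rc \<open>c \<in> S\<close> by auto
  then show "r \<in> S"
    using coord_invariantD[OF inv_A, of r l] A l rc by auto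
qed

lemma coord_invariant_pow:
  assumes "A \<in> carrier_mat N N" "coord_invariant S A"
  shows "coord_invariant S (A ^\<^sub>m k)"
proof (induction k)
  case 0 show ?case by (simp add: coord_invariant_one)
next
  case (Suc k) then show ?case
    using coord_invariant_mult[OF pow_carrier_mat[OF assms(1)] assms(1) Suc.IH assms(2)] by simp
qed

lemma coord_invariant_mat_exp:
  assumes A: "A \<in> carrier_mat N N" and inv: "coord_invariant S A"
  shows "coord_invariant S (mat_exp A)"
  unfolding coord_invariant_def
proof (intro allI impI)
  fix r c assume rc: "r < dim_row (mat_exp A)" "c < dim_col (mat_exp A)" "c \<in> S"
    and nonzero: "mat_exp A $$ (r,c) \<noteq> 0"
  show "r \<in> S"
  proof (rule ccontr)
    assume "r \<notin> S"
    then have "(A ^\<^sub>m k) $$ (r,c) = 0" for k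
      using rc A mat_exp_carrier[OF A]
      by (intro coord_invariantD[OF coord_invariant_pow[OF A inv]]) auto
    then show False
      using rc nonzero by (simp add: mat_exp_def)
  qed
qed

definition supported_on :: "nat set \<Rightarrow> 'a::zero vec \<Rightarrow> bool" where
  "supported_on S v \<longleftrightarrow> (\<forall>i < dim_vec v. i \<notin> S \<longrightarrow> v $ i = 0)"

lemma supported_on_mult_mat_vec:
  fixes U :: "'a::semiring_0 mat"
  assumes U: "U \<in> carrier_mat N N" and "coord_invariant S U"
    and w: "w \<in> carrier_vec N" and "supported_on S w"
  shows "supported_on S (U *\<^sub>v w)"
  unfolding supported_on_def
proof (intro allI impI)
  fix r assume "r < dim_vec (U *\<^sub>v w)" "r \<notin> S"
  moreover have "U $$ (r,c) * w $ c = 0" if "r < N" "r \<notin> S" "c < N" for c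
    using assms that unfolding supported_on_def by (cases "c \<in> S") (auto simp: coord_invariantD)
  ultimately show "(U *\<^sub>v w) $ r = 0"
    using U w by (simp add: scalar_prod_def lessThan_atLeast0)
qed

lemma sq_norm_vec_supported_on:
  assumes "supported_on S v" "S \<subseteq> {..<dim_vec v}"
  shows "sq_norm_vec v = (\<Sum>i\<in>S. (cmod (v $ i))\<^sup>2)"
  unfolding sq_norm_vec_def
  using assms by (intro sum.mono_neutral_right) (auto simp: supported_on_def)

section \<open>One-hot encoding\<close>

lemma labelsD: "x \<in> labels m n \<Longrightarrow> b < m \<Longrightarrow> x b < n"
  unfolding labels_def by auto

lemma labels_upd: "x \<in> labels m n \<Longrightarrow> b < m \<Longrightarrow> j < n \<Longrightarrow> x(b := j) \<in> labels m n"
  unfolding labels_def by (auto simp: PiE_iff extensional_def)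

lemma finite_labels: "finite (labels m n)"
  unfolding labels_def by (simp add: finite_PiE)

lemma card_labels: "card (labels m n) = n ^ m"
  unfolding labels_def by (simp add: card_PiE)

lemma block_qubit_less:
  assumes "b < m" "i < n"
  shows "b * n + i < m * (n::nat)"
proof -
  have "b * n + i < Suc b * n" using assms(2) by simp
  also have "\<dots> \<le> m * n" using assms(1) by (intro mult_right_mono) auto
  finally show ?thesis .
qed

lemma block_qubit_eq_iff:
  assumes "i < n" "j < n"
  shows "b * n + i = b' * n + j \<longleftrightarrow> b = b' \<and> i = (j::nat)"
proof
  assume eq: "b * n + i = b' * n + j"
  have "b = (b * n + i) div n" "i = (b * n + i) mod n" "b' = (b' * n + j) div n" "j = (b' * n + j) mod n"
    using assms by auto
  then show "b = b' \<and> i = j" using eq by metis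
qed simp

lemma bit_sum_power2_iff: "finite Q \<Longrightarrow> bit (\<Sum>q\<in>Q. (2::nat) ^ q) p \<longleftrightarrow> p \<in> Q"
proof (induction Q arbitrary: p rule: finite_induct)
  case (insert q Q)
  then have "bit (2 ^ q + (\<Sum>q\<in>Q. (2::nat) ^ q)) p \<longleftrightarrow> bit ((2::nat) ^ q) p \<or> bit (\<Sum>q\<in>Q. (2::nat) ^ q) p"
    by (intro bit_disjunctive_add_iff) (auto simp: bit_exp_iff)
  with insert show ?case by (auto simp: bit_exp_iff)
qed simp

lemma bit_oh_index:
  assumes "x \<in> labels m n"
  shows "bit (oh_index m n x) p \<longleftrightarrow> (\<exists>b<m. p = b * n + x b)"
proof -
  have "inj_on (\<lambda>b. b * n + x b) {..<m}"
    using labelsD[OF assms] by (auto intro!: inj_onI simp: block_qubit_eq_iff)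
  then have "oh_index m n x = (\<Sum>q \<in> (\<lambda>b. b * n + x b) ` {..<m}. 2 ^ q)"
    unfolding oh_index_def by (simp add: sum.reindex)
  then show ?thesis by (auto simp: bit_sum_power2_iff)
qed

lemma bit_oh_index_block:
  assumes "x \<in> labels m n" "b < m" "i < n"
  shows "bit (oh_index m n x) (b * n + i) \<longleftrightarrow> x b = i"
  using assms labelsD[OF assms(1)] by (auto simp: bit_oh_index block_qubit_eq_iff)

lemma oh_index_less:
  assumes "x \<in> labels m n"
  shows "oh_index m n x < 2 ^ (m * n)"
proof -
  have "take_bit (m * n) (oh_index m n x) = oh_index m n x"
    using assms labelsD[OF assms]
    by (intro bit_eqI) (auto simp: bit_take_bit_iff bit_oh_index block_qubit_less)
  then show ?thesis by (simp add: take_bit_nat_eq_self_iff)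
qed

lemma inj_on_oh_index: "inj_on (oh_index m n) (labels m n)"
proof (rule inj_onI)
  fix x y assume x: "x \<in> labels m n" and y: "y \<in> labels m n" and eq: "oh_index m n x = oh_index m n y"
  have "x b = y b" if "b \<in> {..<m}" for b
  proof -
    have "bit (oh_index m n x) (b * n + x b)"
      using x that by (simp add: bit_oh_index_block labelsD)
    then show ?thesis
      using eq x y that by (simp add: bit_oh_index_block labelsD)
  qed
  then show "x = y"
    using x y unfolding labels_def by (intro PiE_ext[of x "{..<m}" "\<lambda>_. {..<n}" y]) auto
qed

abbreviation one_hot :: "nat \<Rightarrow> nat \<Rightarrow> nat set" where
  "one_hot m n \<equiv> oh_index m n ` labels m n"

lemma one_hot_subset: "one_hot m n \<subseteq> {..<2 ^ (m * n)}"
  using oh_index_less by blast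

text \<open>Stated additively to avoid truncated subtraction on nat.\<close>

lemma oh_index_upd:
  assumes "b < m"
  shows "oh_index m n (x(b := j)) + 2 ^ (b * n + x b) = oh_index m n x + 2 ^ (b * n + j)"
proof -
  have "oh_index m n y = 2 ^ (b * n + y b) + (\<Sum>b' \<in> {..<m} - {b}. 2 ^ (b' * n + y b'))" for y
    unfolding oh_index_def using assms by (subst sum.remove[of _ b]) auto
  from this[of x] this[of "x(b := j)"] show ?thesis by simp
qed

lemma flip_bit_commute: "flip_bit q (flip_bit q' a) = flip_bit q' (flip_bit q a)"
  by (rule bit_eqI) (auto simp: bit_flip_bit_iff)

lemma flip_bit_flip_bit_add:
  assumes "bit (c::nat) q" "\<not> bit c q'"
  shows "flip_bit q (flip_bit q' c) + 2 ^ q = c + 2 ^ q'"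
proof -
  have flip_unset: "flip_bit q a + 2 ^ q = a" if "bit (a::nat) q" for a
  proof -
    have "a = set_bit q (flip_bit q a)"
      using that by (intro bit_eqI) (auto simp: bit_set_bit_iff bit_flip_bit_iff)
    also have "\<dots> = flip_bit q a + 2 ^ q"
      using that by (simp add: set_bit_eq bit_flip_bit_iff)
    finally show ?thesis by simp
  qed
  have "flip_bit q' c = c + 2 ^ q'"
    using assms(2) by (simp add: flip_bit_eq_if set_bit_eq)
  moreover have "bit (flip_bit q' c) q"
    using assms by (auto simp: bit_flip_bit_iff)
  ultimately show ?thesis using flip_unset by metis
qed

lemma flip_bit_oh_index:
  assumes x: "x \<in> labels m n" and "b < m" "j < n" "x b \<noteq> j"
  shows "flip_bit (b * n + x b) (flip_bit (b * n + j) (oh_index m n x)) = oh_index m n (x(b := j))"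
proof -
  have "bit (oh_index m n x) (b * n + x b)" "\<not> bit (oh_index m n x) (b * n + j)"
    using assms labelsD[OF x] by (simp_all add: bit_oh_index_block)
  from flip_bit_flip_bit_add[OF this] show ?thesis
    using oh_index_upd[OF assms(2), of n x j] by simp
qed

section \<open>The XY mixer\<close>

lemma flip_bit_less_exp: "q < N \<Longrightarrow> (c::nat) < 2 ^ N \<Longrightarrow> flip_bit q c < 2 ^ N"
  by (metis take_bit_flip_bit_eq take_bit_nat_eq_self_iff not_le)

lemma index_mult_monomial_mat:
  fixes A :: "'a::semiring_0 mat"
  assumes "A \<in> carrier_mat N N" "r < N" "c < N" "h c < N"
  shows "(A * mat N N (\<lambda>(r,c). if r = h c then v c else 0)) $$ (r,c) = A $$ (r, h c) * v c"
  using assms by (simp add: scalar_prod_def lessThan_atLeast0 if_distrib sum.delta cong: if_cong)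

lemma index_pauliX_mult_pauliX:
  assumes "q < N" "q' < N" "r < 2 ^ N" "c < 2 ^ N"
  shows "(pauliX N q * pauliX N q') $$ (r,c) = (if r = flip_bit q (flip_bit q' c) then 1 else 0)"
  unfolding pauliX_def[of N q']
  using assms flip_bit_less_exp[OF assms(2,4)]
  by (subst index_mult_monomial_mat[of _ "2^N"]) (auto simp: pauliX_def)

lemma index_pauliY_mult_pauliY:
  assumes "q < N" "q' < N" "r < 2 ^ N" "c < 2 ^ N"
  shows "(pauliY N q * pauliY N q') $$ (r,c) = (if r = flip_bit q (flip_bit q' c)
     then (if bit (flip_bit q' c) q then - \<i> else \<i>) * (if bit c q' then - \<i> else \<i>) else 0)"
  unfolding pauliY_def[of N q']
  using assms flip_bit_less_exp[OF assms(2,4)]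
  by (subst index_mult_monomial_mat[of _ "2^N"]) (auto simp: pauliY_def)

definition hop :: "nat \<Rightarrow> nat \<Rightarrow> nat \<Rightarrow> nat \<Rightarrow> complex" where
  "hop q q' r c = (if r = flip_bit q (flip_bit q' c) \<and> bit c q \<noteq> bit c q' then 2 else 0)"

lemma index_pauli_hop:
  assumes "q < N" "q' < N" "q \<noteq> q'" "r < 2 ^ N" "c < 2 ^ N"
  shows "(pauliX N q * pauliX N q' + pauliY N q * pauliY N q') $$ (r,c) = hop q q' r c"
proof -
  have "(pauliX N q * pauliX N q' + pauliY N q * pauliY N q') $$ (r,c)
      = (pauliX N q * pauliX N q') $$ (r,c) + (pauliY N q * pauliY N q') $$ (r,c)"
    using assms by (simp add: pauliX_def pauliY_def)
  also have "\<dots> = hop q q' r c"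
    unfolding index_pauliX_mult_pauliX[OF assms(1,2,4,5)] index_pauliY_mult_pauliY[OF assms(1,2,4,5)]
    using assms(3) by (cases "bit c q"; cases "bit c q'") (auto simp: hop_def bit_flip_bit_iff)
  finally show ?thesis .
qed

lemma hop_sym:
  assumes "q \<noteq> q'"
  shows "hop q q' r c = hop q q' c r"
proof -
  have flip_flip: "flip_bit q (flip_bit q' (flip_bit q (flip_bit q' a))) = a" for a :: nat
    by (rule bit_eqI) (auto simp: bit_flip_bit_iff)
  have "bit (flip_bit q (flip_bit q' a)) q = (\<not> bit a q)" "bit (flip_bit q (flip_bit q' a)) q' = (\<not> bit a q')"
    for a :: nat
    using assms by (auto simp: bit_flip_bit_iff)
  then show ?thesis
    unfolding hop_def by (metis flip_flip)
qed

lemma cnj_hop: "cnj (hop q q' r c) = hop q q' r c"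
  by (simp add: hop_def)

lemma index_mixer_block:
  assumes "b < m" "r < 2 ^ (m*n)" "c < 2 ^ (m*n)"
  shows "mixer_block m n b $$ (r,c) = (\<Sum>i<n. \<Sum>j\<in>{i<..<n}. hop (b*n+i) (b*n+j) r c)"
  using assms block_qubit_less[OF assms(1)] unfolding mixer_block_def
  by (auto intro!: sum.cong index_pauli_hop)

lemma hermitian_mixer_block:
  assumes "b < m"
  shows "hermitian_mat (mixer_block m n b)"
proof -
  have "mixer_block m n b $$ (c,r) = cnj (mixer_block m n b $$ (r,c))"
    if "r < 2 ^ (m*n)" "c < 2 ^ (m*n)" for r c
    using assms that by (auto simp: index_mixer_block cnj_sum cnj_hop intro!: sum.cong hop_sym)
  then show ?thesis
    unfolding hermitian_mat_def by (simp add: mixer_block_def)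
qed

lemma coord_invariant_mixer_block:
  assumes b: "b < m"
  shows "coord_invariant (one_hot m n) (mixer_block m n b)"
  unfolding coord_invariant_def
proof (intro allI impI)
  fix r c assume "r < dim_row (mixer_block m n b)" "c < dim_col (mixer_block m n b)"
    and "c \<in> one_hot m n" and nonzero: "mixer_block m n b $$ (r,c) \<noteq> 0"
  then obtain x where x: "x \<in> labels m n" and c: "c = oh_index m n x"
    and rc: "r < 2 ^ (m*n)" "c < 2 ^ (m*n)"
    by (auto simp: mixer_block_def)
  obtain i j where ij: "i < j" "j < n" and "hop (b*n+i) (b*n+j) r c \<noteq> 0"
    using nonzero unfolding index_mixer_block[OF b rc]
    by (elim sum.not_neutral_contains_not_neutral) auto
  then have r: "r = flip_bit (b*n+i) (flip_bit (b*n+j) c)" and "(x b = i) \<noteq> (x b = j)"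
    using bit_oh_index_block[OF x b] c unfolding hop_def by (auto split: if_splits)
  then consider "x b = i" "x b \<noteq> j" | "x b = j" "x b \<noteq> i" by blast
  then show "r \<in> one_hot m n"
  proof cases
    case 1
    then have "r = oh_index m n (x(b := j))" using r c flip_bit_oh_index[OF x b ij(2)] by simp
    then show ?thesis using labels_upd[OF x b ij(2)] by blast
  next
    case 2
    then have "r = oh_index m n (x(b := i))"
      using r c flip_bit_oh_index[OF x b, of i] ij by (simp add: flip_bit_commute)
    then show ?thesis using labels_upd[OF x b, of i] ij by auto
  qed
qed

lemma isometric_mixer_unitary_upto:
  "k \<le> m \<Longrightarrow> isometric_mat (2 ^ (m * n)) (mixer_unitary_upto m n \<beta> k)"
proof (induction k)
  case (Suc k)
  have "isometric_mat (2 ^ (m * n)) (mat_exp ((- \<i> * complex_of_real \<beta>) \<cdot>\<^sub>m mixer_block m n k))"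
    using Suc.prems by (intro isometric_mat_exp hermitian_mixer_block) (auto simp: mixer_block_def)
  with Suc show ?case by (simp add: isometric_mat_mult)
qed (simp add: isometric_mat_one)

lemma coord_invariant_mixer_unitary_upto:
  "k \<le> m \<Longrightarrow> coord_invariant (one_hot m n) (mixer_unitary_upto m n \<beta> k)"
proof (induction k)
  case (Suc k)
  have "coord_invariant (one_hot m n) (mat_exp ((- \<i> * complex_of_real \<beta>) \<cdot>\<^sub>m mixer_block m n k))"
    using Suc.prems
    by (intro coord_invariant_mat_exp coord_invariant_smult coord_invariant_mixer_block)
      (auto simp: mixer_block_def)
  moreover have "mixer_unitary_upto m n \<beta> k \<in> carrier_mat (2 ^ (m * n)) (2 ^ (m * n))"
    using isometric_mixer_unitary_upto Suc.prems unfolding isometric_mat_def by simp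
  ultimately show ?case
    using Suc by (simp add: coord_invariant_mult[of _ "2 ^ (m * n)"] mixer_block_def)
qed (simp add: coord_invariant_one)

lemma s0_carrier: "s0 m n \<in> carrier_vec (2 ^ (m * n))"
  unfolding s0_def by simp

lemma index_s0:
  assumes "z < 2 ^ (m * n)"
  shows "s0 m n $ z = (if z \<in> one_hot m n then complex_of_real ((1 / sqrt n) ^ m) else 0)"
proof (cases "z \<in> one_hot m n")
  case True
  then obtain y where y: "y \<in> labels m n" "z = oh_index m n y" by blast
  then have "oh_index m n x = z \<longleftrightarrow> x = y" if "x \<in> labels m n" for x
    using inj_on_oh_index[of m n] that by (auto dest: inj_onD)
  then show ?thesis
    using assms True y(1) by (simp add: s0_def finite_labels sum.delta' cong: if_cong)
next
  case False
  then show ?thesis using assms by (auto simp: s0_def intro!: sum.neutral)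
qed

lemma supported_on_s0: "supported_on (one_hot m n) (s0 m n)"
  unfolding supported_on_def using s0_carrier[of m n] by (auto simp: index_s0)

lemma sq_norm_vec_s0:
  assumes "n > 0"
  shows "sq_norm_vec (s0 m n) = 1"
proof -
  have "(cmod (complex_of_real ((1 / sqrt n) ^ m)))\<^sup>2 = ((1 / sqrt n) ^ m)\<^sup>2"
    by (simp only: norm_of_real power2_abs)
  also have "\<dots> = ((1 / sqrt n)\<^sup>2) ^ m"
    by (metis power_mult mult.commute)
  also have "\<dots> = 1 / real n ^ m"
    using assms by (simp add: power_divide)
  finally have entry: "(cmod (s0 m n $ z))\<^sup>2 = 1 / real n ^ m" if "z \<in> one_hot m n" for z
    using that oh_index_less by (auto simp: index_s0)
  have "sq_norm_vec (s0 m n) = (\<Sum>z \<in> one_hot m n. (cmod (s0 m n $ z))\<^sup>2)"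
    using s0_carrier[of m n] one_hot_subset[of m n] by (simp add: sq_norm_vec_supported_on[OF supported_on_s0])
  also have "\<dots> = (\<Sum>z \<in> one_hot m n. 1 / real n ^ m)"
    using entry by (rule sum.cong[OF refl])
  also have "\<dots> = 1"
    using assms by (simp add: card_image[OF inj_on_oh_index] card_labels)
  finally show ?thesis .
qed

lemma isometric_U_M_mult_U_C:
  assumes "H \<in> carrier_mat (2 ^ (m * n)) (2 ^ (m * n))" "hermitian_mat H"
  shows "isometric_mat (2 ^ (m * n)) (U_M m n \<beta> * U_C H \<gamma>)"
  unfolding U_M_def U_C_def
  by (intro isometric_mat_mult isometric_mixer_unitary_upto isometric_mat_exp assms) simp

lemma coord_invariant_U_M_mult_U_C:
  assumes "H \<in> carrier_mat (2 ^ (m * n)) (2 ^ (m * n))" "diagonal_mat H"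
  shows "coord_invariant (one_hot m n) (U_M m n \<beta> * U_C H \<gamma>)"
proof -
  have "U_M m n \<beta> \<in> carrier_mat (2 ^ (m * n)) (2 ^ (m * n))"
    using isometric_mixer_unitary_upto[of m m n \<beta>] unfolding U_M_def isometric_mat_def by simp
  moreover have "coord_invariant (one_hot m n) (U_M m n \<beta>)"
    unfolding U_M_def by (rule coord_invariant_mixer_unitary_upto) simp
  moreover have "coord_invariant (one_hot m n) (U_C H \<gamma>)"
    unfolding U_C_def using assms
    by (intro coord_invariant_mat_exp coord_invariant_smult coord_invariant_diagonal) auto
  ultimately show ?thesis
    using assms(1) by (intro coord_invariant_mult) (auto simp: U_C_def)
qed

lemma ex_label_sq_norm_ge:
  assumes "supported_on (one_hot m n) v" "sq_norm_vec v = 1" "dim_vec v = 2 ^ (m * n)" "n > 0"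
  shows "\<exists>y \<in> labels m n. (cmod (v $ oh_index m n y))\<^sup>2 \<ge> 1 / real n ^ m"
proof (rule ccontr)
  assume "\<not> ?thesis"
  then have "(\<Sum>x \<in> labels m n. (cmod (v $ oh_index m n x))\<^sup>2) < real (card (labels m n)) * (1 / real n ^ m)"
    using assms(4) by (intro sum_bounded_above_strict) (auto simp: card_labels)
  moreover have "(\<Sum>x \<in> labels m n. (cmod (v $ oh_index m n x))\<^sup>2) = 1"
    using assms one_hot_subset[of m n]
    by (simp add: sq_norm_vec_supported_on sum.reindex[OF inj_on_oh_index, unfolded comp_def])
  ultimately show False
    using assms(4) by (simp add: card_labels)
qed

lemma ex_blockperm_eq:
  assumes "x \<in> labels m n" "y \<in> labels m n"
  shows "\<exists>\<pi>. (\<forall>b<m. \<pi> b permutes {..<n}) \<and> blockperm m \<pi> x = y"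
proof (intro exI conjI allI impI)
  show "transpose (x b) (y b) permutes {..<n}" if "b < m" for b
    using assms that by (intro permutes_swap_id) (auto simp: labelsD)
  show "blockperm m (\<lambda>b. transpose (x b) (y b)) x = y"
    using assms(2) unfolding blockperm_def labels_def by (auto simp: PiE_iff extensional_def)
qed

theorem mainTheorem9:
  fixes m n :: nat and H :: "complex mat" and xs :: "nat \<Rightarrow> nat" and \<gamma> \<beta> :: real
  assumes "n \<ge> 2" and "m \<ge> 1"
    and "H \<in> carrier_mat (2^(m*n)) (2^(m*n))"
    and "hermitian_mat H" and "diagonal_mat H"
    and "xs \<in> labels m n"
  shows "\<exists>\<pi>. (\<forall>b<m. \<pi> b permutes {..<n}) \<and>
    (cmod ((U_M m n \<beta> * U_C H \<gamma> *\<^sub>v s0 m n) $ oh_index m n (blockperm m \<pi> xs)))\<^sup>2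
      \<ge> 1 / real n ^ m"
proof -
  let ?U = "U_M m n \<beta> * U_C H \<gamma>"
  have "isometric_mat (2 ^ (m * n)) ?U"
    using isometric_U_M_mult_U_C[OF assms(3,4)] .
  moreover have "coord_invariant (one_hot m n) ?U"
    using coord_invariant_U_M_mult_U_C[OF assms(3,5)] .
  ultimately have "supported_on (one_hot m n) (?U *\<^sub>v s0 m n)" "sq_norm_vec (?U *\<^sub>v s0 m n) = 1"
    "dim_vec (?U *\<^sub>v s0 m n) = 2 ^ (m * n)"
    using supported_on_mult_mat_vec[OF _ _ s0_carrier supported_on_s0] sq_norm_vec_s0 s0_carrier assms(1)
    unfolding isometric_mat_def by auto
  then obtain y where "y \<in> labels m n" "(cmod ((?U *\<^sub>v s0 m n) $ oh_index m n y))\<^sup>2 \<ge> 1 / real n ^ m"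
    using ex_label_sq_norm_ge assms(1) by force
  with ex_blockperm_eq[OF assms(6)] show ?thesis by metis
qed

end
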